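(* Let $\{\varphi_j\}_{j=1}^\infty\subseteq M(D(\delta_1))$, $\Phi=(\varphi_1,\varphi_2,\dots)$. Then: (i) $M_\Phi$ is a bounded operator from $D(\delta_1)$ to $\oplus_1^\infty D(\delta_1)$ if and only if $\sum_{j=1}^\infty\|\varphi_j\|_{D(\delta_1)}^2<\infty$ and $\sup_{z\in\mathbb{D}}\sum_{j=1}^\infty|\varphi_j(z)|^2<\infty$. (ii) If $\|M_\Phi\|\le1$ and $0<\epsilon^2\le\sum_{j=1}^\infty|\varphi_j(z)|^2$ for all $z\in\mathbb{D}$, then $\Phi(1)=(\varphi_1(1),\varphi_2(1),\dots)\neq0$. (iii) If $\|M_\Phi\|\le1$ and $f=\sum_{i=1}^\infty[\varphi_i-\varphi_i(1)]\overline{\varphi_i(1)}$, then $f\in M(D(\delta_1))$ and $f(1)=0$.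
   Context: $\mathbb{D}$ is the open unit disc. $D(\delta_1)$ is the space of $f\in H^2(\mathbb{D})$ with $f=f(1)+(z-1)g$ for a constant $f(1)$ and some $g\in H^2(\mathbb{D})$, normed by $\|f\|_{D(\delta_1)}^2=\|f\|_{H^2}^2+\|g\|_{H^2}^2$; $f(1)=\lim_{r\to1^-}f(r)$. $M(D(\delta_1))=D(\delta_1)\cap H^\infty(\mathbb{D})$ is its multiplier algebra. $\oplus_1^\infty D(\delta_1)$ is the Hilbert space of sequences $(f_j)$ in $D(\delta_1)$ with $\sum_j\|f_j\|^2_{D(\delta_1)}<\infty$, and $M_\Phi f=(\varphi_jf)_{j=1}^\infty$. *)

theory Defs
  imports "HOL-Analysis.Analysis"
begin

abbreviation disc :: "complex set" where "disc \<equiv> ball 0 1"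

definition taylor_coeff :: "(complex \<Rightarrow> complex) \<Rightarrow> nat \<Rightarrow> complex" where
  "taylor_coeff f n = (deriv ^^ n) f 0 / of_nat (fact n)"

definition H2 :: "(complex \<Rightarrow> complex) set" where
  "H2 = {f. f holomorphic_on disc \<and> summable (\<lambda>n. (cmod (taylor_coeff f n))\<^sup>2)}"

definition H2_norm :: "(complex \<Rightarrow> complex) \<Rightarrow> real" where
  "H2_norm f = sqrt (\<Sum>n. (cmod (taylor_coeff f n))\<^sup>2)"

text \<open>Radial boundary value at 1: f(1) = lim_{r -> 1-} f(r).\<close>
definition bv1 :: "(complex \<Rightarrow> complex) \<Rightarrow> complex" where
  "bv1 f = Lim (at_left (1::real)) (\<lambda>r. f (complex_of_real r))"

definition Dd1 :: "(complex \<Rightarrow> complex) set" where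
  "Dd1 = {f. f \<in> H2 \<and> (\<exists>c g. g \<in> H2 \<and> (\<forall>z\<in>disc. f z = c + (z - 1) * g z))}"

definition Dd1_quot :: "(complex \<Rightarrow> complex) \<Rightarrow> complex \<Rightarrow> complex" where
  "Dd1_quot f z = (f z - bv1 f) / (z - 1)"

definition Dd1_norm :: "(complex \<Rightarrow> complex) \<Rightarrow> real" where
  "Dd1_norm f = sqrt ((H2_norm f)\<^sup>2 + (H2_norm (Dd1_quot f))\<^sup>2)"

text \<open>Multiplier algebra M(D(delta_1)) = D(delta_1) \<inter> H^\<infinity>.\<close>
definition MDd1 :: "(complex \<Rightarrow> complex) set" where
  "MDd1 = {f. f \<in> Dd1 \<and> bounded (f ` disc)}"

definition MPhi_bounded_by :: "(nat \<Rightarrow> complex \<Rightarrow> complex) \<Rightarrow> real \<Rightarrow> bool" where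
  "MPhi_bounded_by \<Phi> C \<longleftrightarrow>
     (\<forall>f\<in>Dd1. (\<forall>j. (\<lambda>z. \<Phi> j z * f z) \<in> Dd1)
        \<and> summable (\<lambda>j. (Dd1_norm (\<lambda>z. \<Phi> j z * f z))\<^sup>2)
        \<and> (\<Sum>j. (Dd1_norm (\<lambda>z. \<Phi> j z * f z))\<^sup>2) \<le> C\<^sup>2 * (Dd1_norm f)\<^sup>2)"

definition MPhi_bounded :: "(nat \<Rightarrow> complex \<Rightarrow> complex) \<Rightarrow> bool" where
  "MPhi_bounded \<Phi> \<longleftrightarrow> (\<exists>C. MPhi_bounded_by \<Phi> C)"

end

theory Submission
  imports Defs "HOL-Complex_Analysis.Complex_Analysis"
begin

text \<open>Writing \<open>f = f(1) + (z - 1) g\<close>, the pointwise bound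
  for \<open>H\<^sup>2\<close> gives \<open>|f(r) - f(1)|\<^sup>2 \<le> (1 - r) \<parallel>g\<parallel>\<^sup>2\<close>; and Parseval's identity on circles
  turns \<open>H\<^sup>2\<close> norms into circle means, so that \<open>\<Sum> |\<phi>\<^sub>j|\<^sup>2 \<le> B\<close> on the disc gives
  \<open>\<Sum> \<parallel>\<phi>\<^sub>j h\<parallel>\<^sup>2 \<le> B \<parallel>h\<parallel>\<^sup>2\<close> in \<open>H\<^sup>2\<close>.

  If \<open>M\<^sub>\<Phi>\<close> is bounded, applying it to \<open>1\<close> bounds \<open>\<Sum> \<parallel>\<phi>\<^sub>j\<parallel>\<^sup>2\<close>, and
  \<open>\<Sum>\<^sub>j\<^sub><\<^sub>N conj(\<phi>\<^sub>j(w)) \<phi>\<^sub>j\<close> is a multiplier whose value at \<open>w\<close> controls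
  \<open>\<Sum> |\<phi>\<^sub>j(w)|\<^sup>2\<close>, since multipliers are bounded by their multiplier norm. Conversely
  \<open>\<phi>\<^sub>j f = \<phi>\<^sub>j(1) f(1) + (z - 1)(\<phi>\<^sub>j g + f(1) \<psi>\<^sub>j)\<close> bounds \<open>M\<^sub>\<Phi>\<close> in terms of the two
  quantities. Parts (ii) and (iii) follow from the radial estimate and from
  \<open>\<Sum> (\<phi>\<^sub>i - \<phi>\<^sub>i(1)) conj(\<phi>\<^sub>i(1)) = (z - 1) \<Sum> conj(\<phi>\<^sub>i(1)) \<psi>\<^sub>i\<close>, a series that converges
  absolutely in \<open>H\<^sup>2\<close>.\<close>

section \<open>Series and elementary inequalities\<close>

lemma cauchy_schwarz_suminf:
  fixes x y :: "nat \<Rightarrow> real"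
  assumes "summable (\<lambda>n. (x n)\<^sup>2)" "summable (\<lambda>n. (y n)\<^sup>2)"
  shows "summable (\<lambda>n. \<bar>x n * y n\<bar>)"
    "(\<Sum>n. \<bar>x n * y n\<bar>) \<le> sqrt (\<Sum>n. (x n)\<^sup>2) * sqrt (\<Sum>n. (y n)\<^sup>2)"
proof -
  have le: "\<bar>x n * y n\<bar> \<le> ((x n)\<^sup>2 + (y n)\<^sup>2) / 2" for n
    using sum_squares_bound[of "\<bar>x n\<bar>" "\<bar>y n\<bar>"] by (simp add: abs_mult)
  have "summable (\<lambda>n. ((x n)\<^sup>2 + (y n)\<^sup>2) / 2)"
    using assms by (intro summable_divide summable_add)
  then show s: "summable (\<lambda>n. \<bar>x n * y n\<bar>)"
    by (rule summable_comparison_test'[where N = 0]) (use le in auto)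
  show "(\<Sum>n. \<bar>x n * y n\<bar>) \<le> sqrt (\<Sum>n. (x n)\<^sup>2) * sqrt (\<Sum>n. (y n)\<^sup>2)"
  proof (rule suminf_le_const[OF s])
    fix N
    have "(\<Sum>n<N. \<bar>x n * y n\<bar>) \<le> L2_set x {..<N} * L2_set y {..<N}"
      using L2_set_mult_ineq[of x y "{..<N}"] by (simp add: abs_mult)
    also have "\<dots> \<le> sqrt (\<Sum>n. (x n)\<^sup>2) * sqrt (\<Sum>n. (y n)\<^sup>2)"
      unfolding L2_set_def
      by (intro mult_mono real_sqrt_le_mono sum_le_suminf assms)
        (auto intro: sum_nonneg suminf_nonneg assms)
    finally show "(\<Sum>n<N. \<bar>x n * y n\<bar>) \<le> \<dots>" .
  qed
qed

lemma minkowski_suminf: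
  fixes x y :: "nat \<Rightarrow> real"
  assumes "summable (\<lambda>n. (x n)\<^sup>2)" "summable (\<lambda>n. (y n)\<^sup>2)"
  shows "summable (\<lambda>n. (x n + y n)\<^sup>2)"
    "sqrt (\<Sum>n. (x n + y n)\<^sup>2) \<le> sqrt (\<Sum>n. (x n)\<^sup>2) + sqrt (\<Sum>n. (y n)\<^sup>2)"
proof -
  have le: "(x n + y n)\<^sup>2 \<le> 2 * (x n)\<^sup>2 + 2 * (y n)\<^sup>2" for n
    using sum_squares_bound[of "x n" "y n"] by (simp add: power2_sum)
  have "summable (\<lambda>n. 2 * (x n)\<^sup>2 + 2 * (y n)\<^sup>2)"
    using assms by (intro summable_mult summable_add)
  then show s: "summable (\<lambda>n. (x n + y n)\<^sup>2)"
    by (rule summable_comparison_test'[where N = 0]) (use le in auto)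
  let ?R = "sqrt (\<Sum>n. (x n)\<^sup>2) + sqrt (\<Sum>n. (y n)\<^sup>2)"
  have h: "(\<Sum>n. (x n + y n)\<^sup>2) \<le> ?R\<^sup>2"
  proof (rule suminf_le_const[OF s])
    fix N
    have "L2_set (\<lambda>n. x n + y n) {..<N} \<le> L2_set x {..<N} + L2_set y {..<N}"
      by (rule L2_set_triangle_ineq)
    also have "\<dots> \<le> ?R"
      unfolding L2_set_def
      by (intro add_mono real_sqrt_le_mono sum_le_suminf assms) (auto intro: sum_nonneg)
    finally show "(\<Sum>n<N. (x n + y n)\<^sup>2) \<le> ?R\<^sup>2"
      unfolding L2_set_def by (rule sqrt_le_D)
  qed
  show "sqrt (\<Sum>n. (x n + y n)\<^sup>2) \<le> ?R"
    by (rule real_le_lsqrt[OF _ h]) (intro add_nonneg_nonneg real_sqrt_ge_zero suminf_nonneg assms; simp)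
qed

lemma norm_suminf_minus_sum_le:
  fixes f :: "nat \<Rightarrow> 'a::banach"
  assumes "summable m" "\<And>n. norm (f n) \<le> m n"
  shows "norm (suminf f - (\<Sum>n<N. f n)) \<le> suminf m - (\<Sum>n<N. m n)"
proof -
  have sf: "summable (\<lambda>n. norm (f n))"
    by (rule summable_comparison_test'[OF assms(1), where N = 0]) (use assms(2) in auto)
  have "norm (suminf f - (\<Sum>n<N. f n)) = norm (\<Sum>n. f (n + N))"
    using suminf_split_initial_segment[OF summable_norm_cancel[OF sf], of N] by simp
  also have "\<dots> \<le> (\<Sum>n. norm (f (n + N)))"
    by (rule summable_norm) (use summable_ignore_initial_segment[OF sf, of N] in simp)
  also have "\<dots> \<le> (\<Sum>n. m (n + N))"
    by (rule suminf_le) (use assms summable_ignore_initial_segment[OF sf, of N]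
        summable_ignore_initial_segment[OF assms(1), of N] in auto)
  also have "\<dots> = suminf m - (\<Sum>n<N. m n)"
    using suminf_split_initial_segment[OF assms(1), of N] by simp
  finally show ?thesis .
qed

lemma le_of_power_le_const_mult_power:
  fixes q c K :: real
  assumes "0 \<le> c" "0 \<le> q" "\<And>n. q ^ n \<le> K * c ^ n"
  shows "q \<le> c"
proof (rule ccontr)
  assume "\<not> q \<le> c"
  then have "c < q" by simp
  show False
  proof (cases "c = 0")
    case True
    then show False using assms(3)[of 1] \<open>c < q\<close> by simp
  next
    case False
    then have c: "0 < c" using assms(1) by simp
    obtain n where "K < (q / c) ^ n" using real_arch_pow[of "q / c" K] c \<open>c < q\<close> by auto
    moreover have "(q / c) ^ n \<le> K"
      using assms(3)[of n] c by (simp add: power_divide divide_le_eq)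
    ultimately show False by simp
  qed
qed

section \<open>The Hardy space\<close>

lemma taylor_coeff_cong:
  assumes "\<forall>z\<in>disc. f z = g z"
  shows "taylor_coeff f = taylor_coeff g"
proof
  fix n
  have "eventually (\<lambda>x. f x = g x) (nhds (0::complex))"
    using assms eventually_nhds_in_open[of disc 0] by (auto elim!: eventually_mono)
  then have "(deriv ^^ n) f 0 = (deriv ^^ n) g 0" by (rule higher_deriv_cong_ev) simp
  then show "taylor_coeff f n = taylor_coeff g n" by (simp add: taylor_coeff_def)
qed

lemma taylor_coeff_add:
  assumes "f holomorphic_on disc" "g holomorphic_on disc"
  shows "taylor_coeff (\<lambda>z. f z + g z) n = taylor_coeff f n + taylor_coeff g n"
  unfolding taylor_coeff_def using higher_deriv_add[OF assms, of 0 n]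
  by (simp add: add_divide_distrib)

lemma taylor_coeff_cmult:
  assumes "f holomorphic_on disc"
  shows "taylor_coeff (\<lambda>z. c * f z) n = c * taylor_coeff f n"
  unfolding taylor_coeff_def using higher_deriv_cmult[OF assms, of 0 n c] by simp

lemma taylor_coeff_const: "taylor_coeff (\<lambda>_. c) n = (if n = 0 then c else 0)"
proof -
  have "(deriv ^^ Suc k) (\<lambda>_. c) = (\<lambda>_. 0)" for k
    by (induction k) auto
  then show ?thesis
    unfolding taylor_coeff_def by (cases n) (simp_all del: funpow.simps)
qed

lemma taylor_coeff_sums:
  assumes "f holomorphic_on disc" "z \<in> disc"
  shows "(\<lambda>n. taylor_coeff f n * z ^ n) sums f z"
  using holomorphic_power_series[OF assms] by (simp add: taylor_coeff_def)

lemma H2_D: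
  assumes "f \<in> H2"
  shows "f holomorphic_on disc" "summable (\<lambda>n. (cmod (taylor_coeff f n))\<^sup>2)"
  using assms by (simp_all add: H2_def)

lemma H2_norm_sq: "f \<in> H2 \<Longrightarrow> (H2_norm f)\<^sup>2 = (\<Sum>n. (cmod (taylor_coeff f n))\<^sup>2)"
  unfolding H2_norm_def by (intro real_sqrt_pow2 suminf_nonneg H2_D) auto

lemma H2_norm_nonneg: "f \<in> H2 \<Longrightarrow> 0 \<le> H2_norm f"
  unfolding H2_norm_def by (intro real_sqrt_ge_zero suminf_nonneg H2_D) auto

lemma H2_cong:
  assumes "f \<in> H2" "\<forall>z\<in>disc. f z = g z"
  shows "g \<in> H2" "H2_norm g = H2_norm f"
proof -
  have "g holomorphic_on disc"
    using assms holomorphic_cong[of disc disc f g] by (simp add: H2_def)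
  then show "g \<in> H2" using assms taylor_coeff_cong[OF assms(2)] by (simp add: H2_def)
  show "H2_norm g = H2_norm f" using taylor_coeff_cong[OF assms(2)] by (simp add: H2_norm_def)
qed

lemma H2_add:
  assumes "f \<in> H2" "g \<in> H2"
  shows "(\<lambda>z. f z + g z) \<in> H2" "H2_norm (\<lambda>z. f z + g z) \<le> H2_norm f + H2_norm g"
proof -
  note tc = taylor_coeff_add[OF H2_D(1)[OF assms(1)] H2_D(1)[OF assms(2)]]
  note M = minkowski_suminf[OF H2_D(2)[OF assms(1)] H2_D(2)[OF assms(2)]]
  have le: "(cmod (taylor_coeff (\<lambda>z. f z + g z) n))\<^sup>2
      \<le> (cmod (taylor_coeff f n) + cmod (taylor_coeff g n))\<^sup>2" for n
    unfolding tc by (intro power_mono norm_triangle_ineq) auto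
  have s: "summable (\<lambda>n. (cmod (taylor_coeff (\<lambda>z. f z + g z) n))\<^sup>2)"
    by (rule summable_comparison_test'[OF M(1), where N = 0]) (use le in simp)
  then show "(\<lambda>z. f z + g z) \<in> H2"
    using assms by (auto simp: H2_def intro: holomorphic_on_add)
  have "H2_norm (\<lambda>z. f z + g z) \<le> sqrt (\<Sum>n. (cmod (taylor_coeff f n) + cmod (taylor_coeff g n))\<^sup>2)"
    unfolding H2_norm_def by (intro real_sqrt_le_mono suminf_le s M(1) le)
  also have "\<dots> \<le> H2_norm f + H2_norm g" using M(2) by (simp add: H2_norm_def)
  finally show "H2_norm (\<lambda>z. f z + g z) \<le> H2_norm f + H2_norm g" .
qed

lemma H2_cmult:
  assumes "f \<in> H2"
  shows "(\<lambda>z. c * f z) \<in> H2" "H2_norm (\<lambda>z. c * f z) = cmod c * H2_norm f"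
proof -
  have eq: "(\<lambda>n. (cmod (taylor_coeff (\<lambda>z. c * f z) n))\<^sup>2) = (\<lambda>n. (cmod c)\<^sup>2 * (cmod (taylor_coeff f n))\<^sup>2)"
    by (simp add: taylor_coeff_cmult[OF H2_D(1)[OF assms]] norm_mult power_mult_distrib)
  show "(\<lambda>z. c * f z) \<in> H2" using assms unfolding H2_def mem_Collect_eq eq
    by (auto intro!: summable_mult holomorphic_on_mult)
  show "H2_norm (\<lambda>z. c * f z) = cmod c * H2_norm f"
    unfolding H2_norm_def eq suminf_mult[OF H2_D(2)[OF assms]] by (simp add: real_sqrt_mult)
qed

lemma H2_const: "(\<lambda>_. c) \<in> H2" "H2_norm (\<lambda>_. c) = cmod c"
proof -
  have eq: "(\<lambda>n. (cmod (taylor_coeff (\<lambda>_. c) n))\<^sup>2) = (\<lambda>n. if n = 0 then (cmod c)\<^sup>2 else 0)"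
    by (auto simp: taylor_coeff_const)
  show "(\<lambda>_. c) \<in> H2" unfolding H2_def mem_Collect_eq eq by (auto intro: summable_single)
  have "(\<lambda>n. if n = 0 then (cmod c)\<^sup>2 else 0) sums (cmod c)\<^sup>2"
    using sums_single[of 0 "\<lambda>_. (cmod c)\<^sup>2"] by simp
  then show "H2_norm (\<lambda>_. c) = cmod c" unfolding H2_norm_def eq by (simp add: sums_iff)
qed

lemma H2_sum:
  assumes "finite I" "\<And>i. i \<in> I \<Longrightarrow> f i \<in> H2"
  shows "(\<lambda>z. \<Sum>i\<in>I. f i z) \<in> H2 \<and> H2_norm (\<lambda>z. \<Sum>i\<in>I. f i z) \<le> (\<Sum>i\<in>I. H2_norm (f i))"
  using assms
proof (induction I rule: finite_induct)
  case empty
  show ?case using H2_const[of 0] by simp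
next
  case (insert i I)
  then show ?case using H2_add[of "f i" "\<lambda>z. \<Sum>i\<in>I. f i z"] by auto
qed

lemma H2_pointwise_bound:
  assumes "f \<in> H2" "cmod z \<le> \<rho>" "\<rho> < 1"
  shows "cmod (f z) \<le> H2_norm f / sqrt (1 - \<rho>\<^sup>2)"
proof -
  have z: "z \<in> disc" using assms by simp
  have \<rho>: "0 \<le> \<rho>" using assms(2) norm_ge_zero order.trans by blast
  have "(\<lambda>n. (\<rho>\<^sup>2) ^ n) sums (1 / (1 - \<rho>\<^sup>2))"
    by (rule geometric_sums) (use \<rho> assms(3) in \<open>simp add: abs_square_less_1\<close>)
  then have g: "(\<lambda>n. (\<rho> ^ n)\<^sup>2) sums (1 / (1 - \<rho>\<^sup>2))"
    by (simp add: power_mult [symmetric] mult.commute flip: power_mult)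
  note CS = cauchy_schwarz_suminf[OF H2_D(2)[OF assms(1)] sums_summable[OF g]]
  have le: "norm (taylor_coeff f n * z ^ n) \<le> \<bar>cmod (taylor_coeff f n) * \<rho> ^ n\<bar>" for n
    using assms(2) \<rho> by (simp add: norm_mult norm_power abs_mult mult_left_mono power_mono)
  have sm: "summable (\<lambda>n. norm (taylor_coeff f n * z ^ n))"
    by (rule summable_comparison_test'[OF CS(1), where N = 0]) (use le in simp)
  have "cmod (f z) = cmod (\<Sum>n. taylor_coeff f n * z ^ n)"
    using taylor_coeff_sums[OF H2_D(1)[OF assms(1)] z] by (simp add: sums_iff)
  also have "\<dots> \<le> (\<Sum>n. norm (taylor_coeff f n * z ^ n))" by (rule summable_norm[OF sm])
  also have "\<dots> \<le> (\<Sum>n. \<bar>cmod (taylor_coeff f n) * \<rho> ^ n\<bar>)" by (rule suminf_le[OF le sm CS(1)])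
  also have "\<dots> \<le> H2_norm f * sqrt (1 / (1 - \<rho>\<^sup>2))"
    using CS(2) g by (simp add: H2_norm_def sums_iff)
  finally show ?thesis by (simp add: real_sqrt_divide)
qed

section \<open>Circle means and Parseval's identity\<close>

definition circle_mean :: "real \<Rightarrow> (complex \<Rightarrow> complex) \<Rightarrow> real" where
  "circle_mean r h = integral {0..2*pi} (\<lambda>t. (cmod (h (complex_of_real r * cis t)))\<^sup>2) / (2*pi)"

lemma circle_in_disc: "0 \<le> r \<Longrightarrow> r < 1 \<Longrightarrow> complex_of_real r * cis t \<in> disc"
  by (simp add: norm_mult)

lemma continuous_on_circle:
  assumes "continuous_on disc h" "0 \<le> r" "r < 1"
  shows "continuous_on {0..2*pi} (\<lambda>t. (cmod (h (complex_of_real r * cis t)))\<^sup>2)"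
proof -
  have "continuous_on {0..2*pi} (\<lambda>t. h (complex_of_real r * cis t))"
    by (rule continuous_on_compose2[OF assms(1)]) (auto intro!: continuous_intros simp: norm_mult assms)
  then show ?thesis by (intro continuous_intros)
qed

lemma has_integral_cis_int:
  fixes k :: int
  shows "((\<lambda>t. cis (of_int k * t)) has_integral (if k = 0 then complex_of_real (2*pi) else 0)) {0..2*pi}"
proof (cases "k = 0")
  case True
  have "((\<lambda>t. complex_of_real t) has_vector_derivative 1) (at x within {0..2*pi})" for x
    by (rule has_vector_derivative_real_field) (auto intro!: derivative_eq_intros)
  from fundamental_theorem_of_calculus[OF _ this]
  show ?thesis using True by simp
next
  case False
  define G where "G w = exp (\<i> * of_int k * w) / (\<i> * of_int k)" for w :: complex
  have "(G has_field_derivative exp (\<i> * of_int k * w)) (at w)" for w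
    unfolding G_def using False by (auto intro!: derivative_eq_intros simp: field_simps)
  then have "((\<lambda>t. G (of_real t)) has_vector_derivative cis (of_int k * t)) (at t within {0..2*pi})" for t
    using has_vector_derivative_real_field[of G _ "of_real t"] by (simp add: cis_conv_exp mult.assoc)
  from fundamental_theorem_of_calculus[OF _ this]
  have "((\<lambda>t. cis (of_int k * t)) has_integral (G (of_real (2*pi)) - G 0)) {0..2*pi}" by simp
  moreover have "exp (\<i> * of_int k * of_real (2*pi)) = cis (2 * pi * of_int k)"
    by (simp add: cis_conv_exp mult_ac)
  then have "G (of_real (2*pi)) = G 0"
    by (simp add: G_def cis_multiple_2pi)
  ultimately show ?thesis using False by simp
qed

lemma circle_mean_polynomial:
  assumes "0 \<le> r"
  shows "circle_mean r (\<lambda>w. \<Sum>n<N. a n * w ^ n) = (\<Sum>n<N. (cmod (a n) * r ^ n)\<^sup>2)"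
proof -
  define b where "b n = a n * complex_of_real (r ^ n)" for n
  have poly: "(\<Sum>n<N. a n * (complex_of_real r * cis t) ^ n) = (\<Sum>n<N. b n * cis (real n * t))" for t
    by (simp add: b_def power_mult_distrib Complex.DeMoivre mult_ac)
  have sq: "complex_of_real ((cmod (\<Sum>n<N. b n * cis (real n * t)))\<^sup>2) =
      (\<Sum>n<N. \<Sum>m<N. (b n * cnj (b m)) * cis (of_int (int n - int m) * t))" for t
  proof -
    have "complex_of_real ((cmod (\<Sum>n<N. b n * cis (real n * t)))\<^sup>2) =
        (\<Sum>n<N. b n * cis (real n * t)) * cnj (\<Sum>m<N. b m * cis (real m * t))"
      by (rule complex_norm_square)
    also have "\<dots> = (\<Sum>n<N. \<Sum>m<N. (b n * cis (real n * t)) * cnj (b m * cis (real m * t)))"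
      by (simp add: cnj_sum sum_product)
    also have "\<dots> = (\<Sum>n<N. \<Sum>m<N. (b n * cnj (b m)) * cis (of_int (int n - int m) * t))"
      by (intro sum.cong refl) (simp add: cis_cnj cis_mult algebra_simps)
    finally show ?thesis .
  qed
  have "((\<lambda>t. \<Sum>n<N. \<Sum>m<N. (b n * cnj (b m)) * cis (of_int (int n - int m) * t)) has_integral
        (\<Sum>n<N. \<Sum>m<N. (b n * cnj (b m)) * (if int n - int m = 0 then complex_of_real (2*pi) else 0)))
        {0..2*pi}"
    by (intro has_integral_sum finite_lessThan has_integral_mult_right has_integral_cis_int)
  also have "(\<Sum>n<N. \<Sum>m<N. (b n * cnj (b m)) * (if int n - int m = 0 then complex_of_real (2*pi) else 0))
      = complex_of_real (2*pi * (\<Sum>n<N. (cmod (b n))\<^sup>2))"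
    by (simp add: if_distrib sum.delta cong: if_cong)
      (simp add: sum_distrib_left sum_distrib_right mult_ac flip: complex_norm_square)
  finally have "((\<lambda>t. complex_of_real ((cmod (\<Sum>n<N. b n * cis (real n * t)))\<^sup>2)) has_integral
      complex_of_real (2*pi * (\<Sum>n<N. (cmod (b n))\<^sup>2))) {0..2*pi}"
    by (simp only: sq)
  from has_integral_Re[OF this]
  have "integral {0..2*pi} (\<lambda>t. (cmod (\<Sum>n<N. b n * cis (real n * t)))\<^sup>2)
      = 2*pi * (\<Sum>n<N. (cmod (b n))\<^sup>2)"
    by (simp add: integral_unique)
  then show ?thesis
    using assms by (simp add: circle_mean_def poly b_def norm_mult norm_power)
qed

lemma circle_mean_tendsto:
  assumes cont: "\<And>N. continuous_on disc (F N)" "continuous_on disc G" and r: "0 \<le> r" "r < 1"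
    and d: "\<And>N w. cmod w = r \<Longrightarrow> cmod (F N w - G w) \<le> d N" "d \<longlonglongrightarrow> 0"
    and T: "\<And>N w. cmod w = r \<Longrightarrow> cmod (F N w) \<le> T" "\<And>w. cmod w = r \<Longrightarrow> cmod (G w) \<le> T"
  shows "(\<lambda>N. circle_mean r (F N)) \<longlonglongrightarrow> circle_mean r G"
proof -
  define w where "w t = complex_of_real r * cis t" for t
  have w: "cmod (w t) = r" for t using r by (simp add: w_def norm_mult)
  have conv: "\<bar>(cmod (F N (w t)))\<^sup>2 - (cmod (G (w t)))\<^sup>2\<bar> \<le> 2 * T * d N" for N t
  proof -
    have "(cmod (F N (w t)))\<^sup>2 - (cmod (G (w t)))\<^sup>2
        = (cmod (F N (w t)) - cmod (G (w t))) * (cmod (F N (w t)) + cmod (G (w t)))"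
      by (simp add: power2_eq_square algebra_simps)
    then have "\<bar>(cmod (F N (w t)))\<^sup>2 - (cmod (G (w t)))\<^sup>2\<bar>
        = \<bar>cmod (F N (w t)) - cmod (G (w t))\<bar> * (cmod (F N (w t)) + cmod (G (w t)))"
      by (simp add: abs_mult)
    also have "\<dots> \<le> d N * (2 * T)"
      using norm_triangle_ineq3[of "F N (w t)" "G (w t)"] d(1)[OF w, of N t] T(1)[OF w, of N t] T(2)[OF w[of t]]
      by (intro mult_mono) auto
    finally show ?thesis by (simp add: mult_ac)
  qed
  have cF: "continuous_on {0..2*pi} (\<lambda>t. (cmod (F N (w t)))\<^sup>2)" for N
    unfolding w_def by (rule continuous_on_circle[OF cont(1) r])
  have cG: "continuous_on {0..2*pi} (\<lambda>t. (cmod (G (w t)))\<^sup>2)"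
    unfolding w_def by (rule continuous_on_circle[OF cont(2) r])
  have ib: "norm (integral {0..2*pi} (\<lambda>t. (cmod (F N (w t)))\<^sup>2) - integral {0..2*pi} (\<lambda>t. (cmod (G (w t)))\<^sup>2))
      \<le> 2 * T * d N * (2*pi - 0)" for N
  proof -
    have "integral {0..2*pi} (\<lambda>t. (cmod (F N (w t)))\<^sup>2) - integral {0..2*pi} (\<lambda>t. (cmod (G (w t)))\<^sup>2)
        = integral {0..2*pi} (\<lambda>t. (cmod (F N (w t)))\<^sup>2 - (cmod (G (w t)))\<^sup>2)"
      by (intro integral_diff[symmetric] integrable_continuous_interval cF cG)
    also have "norm \<dots> \<le> 2 * T * d N * (2*pi - 0)"
      by (rule integral_bound) (use conv cF cG in \<open>auto intro: continuous_on_diff\<close>)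
    finally show ?thesis .
  qed
  have "(\<lambda>N. 2 * T * d N * (2*pi - 0)) \<longlonglongrightarrow> 2 * T * 0 * (2*pi - 0)"
    by (intro tendsto_mult tendsto_const d(2))
  then have "(\<lambda>N. integral {0..2*pi} (\<lambda>t. (cmod (F N (w t)))\<^sup>2) - integral {0..2*pi} (\<lambda>t. (cmod (G (w t)))\<^sup>2))
      \<longlonglongrightarrow> 0"
    by (intro Lim_null_comparison[OF always_eventually[OF allI[OF ib]]]) simp
  then have "(\<lambda>N. integral {0..2*pi} (\<lambda>t. (cmod (F N (w t)))\<^sup>2)) \<longlonglongrightarrow> integral {0..2*pi} (\<lambda>t. (cmod (G (w t)))\<^sup>2)"
    by (rule LIM_zero_cancel)
  then show ?thesis
    unfolding circle_mean_def w_def by (intro tendsto_divide tendsto_const) auto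
qed

lemma circle_mean_suminf:
  assumes cont: "\<And>n. continuous_on disc (u n)" "continuous_on disc G" and r: "0 \<le> r" "r < 1"
    and G: "\<And>w. cmod w = r \<Longrightarrow> (\<lambda>n. u n w) sums G w"
    and M: "summable M" "\<And>n w. cmod w = r \<Longrightarrow> cmod (u n w) \<le> M n"
  shows "(\<lambda>N. circle_mean r (\<lambda>w. \<Sum>n<N. u n w)) \<longlonglongrightarrow> circle_mean r G"
proof (rule circle_mean_tendsto[OF _ cont(2) r])
  have M0: "0 \<le> M n" for n
    using M(2)[of "complex_of_real r" n] r by (smt (verit) norm_ge_zero norm_of_real)
  show dist: "cmod ((\<Sum>n<N. u n w) - G w) \<le> suminf M - (\<Sum>n<N. M n)" if "cmod w = r" for N w
    using norm_suminf_minus_sum_le[OF M(1) M(2)[OF that]] G[OF that]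
    by (simp add: sums_iff norm_minus_commute)
  show "cmod (\<Sum>n<N. u n w) \<le> suminf M" if "cmod w = r" for N w
  proof -
    have "cmod (\<Sum>n<N. u n w) \<le> (\<Sum>n<N. M n)"
      by (rule order.trans[OF norm_sum sum_mono[OF M(2)[OF that]]])
    also have "\<dots> \<le> suminf M" by (rule sum_le_suminf[OF M(1)]) (auto simp: M0)
    finally show ?thesis .
  qed
  show "cmod (G w) \<le> suminf M" if "cmod w = r" for w
    using dist[OF that, of 0] by simp
  show "(\<lambda>N. suminf M - (\<Sum>n<N. M n)) \<longlonglongrightarrow> 0"
    using tendsto_diff[OF tendsto_const summable_LIMSEQ[OF M(1)], of "suminf M"] by simp
qed (intro continuous_intros cont(1))

lemma circle_mean_parseval:
  assumes hol: "h holomorphic_on disc" and r: "0 \<le> r" "r < 1"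
  shows "(\<lambda>n. (cmod (taylor_coeff h n) * r ^ n)\<^sup>2) sums circle_mean r h"
proof -
  define a where "a = taylor_coeff h"
  define \<rho> where "\<rho> = (1 + r) / 2"
  have \<rho>: "r < \<rho>" "\<rho> < 1" using r by (auto simp: \<rho>_def)
  have "summable (\<lambda>n. a n * complex_of_real \<rho> ^ n)"
    using taylor_coeff_sums[OF hol, of "complex_of_real \<rho>"] \<rho> r unfolding a_def by (auto simp: sums_iff)
  from powser_insidea[OF this, of "complex_of_real r"]
  have M: "summable (\<lambda>n. cmod (a n) * r ^ n)" using \<rho> r by (simp add: norm_mult norm_power)
  have "(\<lambda>N. circle_mean r (\<lambda>w. \<Sum>n<N. a n * w ^ n)) \<longlonglongrightarrow> circle_mean r h"
  proof (rule circle_mean_suminf[OF _ holomorphic_on_imp_continuous_on[OF hol] r _ M])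
    show "continuous_on disc (\<lambda>w. a n * w ^ n)" for n by (intro continuous_intros)
    show "(\<lambda>n. a n * w ^ n) sums h w" if "cmod w = r" for w
      using taylor_coeff_sums[OF hol, of w] that r unfolding a_def by simp
    show "cmod (a n * w ^ n) \<le> cmod (a n) * r ^ n" if "cmod w = r" for n w
      using that by (simp add: norm_mult norm_power)
  qed
  then show ?thesis
    unfolding sums_def circle_mean_polynomial[OF r(1)] a_def .
qed

lemma circle_mean_le_H2_norm:
  assumes "h \<in> H2" "0 \<le> r" "r < 1"
  shows "circle_mean r h \<le> (H2_norm h)\<^sup>2"
proof -
  note P = circle_mean_parseval[OF H2_D(1)[OF assms(1)] assms(2,3)]
  have "(cmod (taylor_coeff h n) * r ^ n)\<^sup>2 \<le> (cmod (taylor_coeff h n))\<^sup>2" for n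
    using assms by (intro power_mono mult_left_le power_le_one) auto
  then have "circle_mean r h \<le> (\<Sum>n. (cmod (taylor_coeff h n))\<^sup>2)"
    using sums_le[OF _ P summable_sums[OF H2_D(2)[OF assms(1)]]] by blast
  then show ?thesis using H2_norm_sq[OF assms(1)] by simp
qed

text \<open>The partial sums of the Parseval series are polynomials in \<open>r\<close>, so their bound survives the
  limit \<open>r \<rightarrow> 1\<close>.\<close>

lemma H2_of_circle_means_le:
  fixes f :: "'i \<Rightarrow> complex \<Rightarrow> complex"
  assumes J: "finite J" and hol: "\<And>j. j \<in> J \<Longrightarrow> f j holomorphic_on disc"
    and M: "\<And>r. 0 \<le> r \<Longrightarrow> r < 1 \<Longrightarrow> (\<Sum>j\<in>J. circle_mean r (f j)) \<le> C"
  shows "\<forall>j\<in>J. f j \<in> H2" "(\<Sum>j\<in>J. (H2_norm (f j))\<^sup>2) \<le> C"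
proof -
  define a where "a j n = (cmod (taylor_coeff (f j) n))\<^sup>2" for j n
  define P where "P K r = (\<Sum>j\<in>J. \<Sum>n<K. (cmod (taylor_coeff (f j) n) * r ^ n)\<^sup>2)" for K r
  have "P K r \<le> C" if r: "0 \<le> r" "r < 1" for K r
  proof -
    have "P K r \<le> (\<Sum>j\<in>J. circle_mean r (f j))"
      unfolding P_def
    proof (rule sum_mono)
      fix j assume "j \<in> J"
      note S = circle_mean_parseval[OF hol[OF this] r]
      show "(\<Sum>n<K. (cmod (taylor_coeff (f j) n) * r ^ n)\<^sup>2) \<le> circle_mean r (f j)"
        unfolding sums_unique[OF S] by (rule sum_le_suminf[OF sums_summable[OF S]]) auto
    qed
    then show ?thesis using M[OF r] by simp
  qed
  moreover have "(\<lambda>m. P K (real m / real (Suc m))) \<longlonglongrightarrow> P K 1" for K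
    unfolding P_def by (intro tendsto_intros LIMSEQ_n_over_Suc_n)
  ultimately have Q: "(\<Sum>j\<in>J. \<Sum>n<K. a j n) \<le> C" for K
    using LIMSEQ_le_const2[of "\<lambda>m. P K (real m / real (Suc m))"] by (force simp: P_def a_def)
  have sj: "summable (a j)" if j: "j \<in> J" for j
  proof (rule summableI_nonneg_bounded)
    show "(\<Sum>n<K. a j n) \<le> C" for K
      using member_le_sum[OF j, of "\<lambda>j. \<Sum>n<K. a j n"] J Q[of K] by (force simp: a_def sum_nonneg)
  qed (simp add: a_def)
  then show "\<forall>j\<in>J. f j \<in> H2" using hol unfolding a_def[abs_def] by (auto simp: H2_def)
  have "(\<lambda>K. \<Sum>j\<in>J. \<Sum>n<K. a j n) \<longlonglongrightarrow> (\<Sum>j\<in>J. suminf (a j))"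
    by (intro tendsto_sum summable_LIMSEQ sj)
  then have "(\<Sum>j\<in>J. suminf (a j)) \<le> C" by (rule LIMSEQ_le_const2) (use Q in auto)
  moreover have "(H2_norm (f j))\<^sup>2 = suminf (a j)" if "j \<in> J" for j
    using H2_norm_sq[of "f j"] sj[OF that] hol[OF that] unfolding a_def[abs_def] by (auto simp: H2_def)
  ultimately show "(\<Sum>j\<in>J. (H2_norm (f j))\<^sup>2) \<le> C" by simp
qed

lemma H2_mult_family:
  fixes \<phi> :: "'i \<Rightarrow> complex \<Rightarrow> complex"
  assumes J: "finite J" and hol: "\<And>j. j \<in> J \<Longrightarrow> \<phi> j holomorphic_on disc"
    and h: "h \<in> H2" and B: "\<And>z. z \<in> disc \<Longrightarrow> (\<Sum>j\<in>J. (cmod (\<phi> j z))\<^sup>2) \<le> B"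
  shows "\<forall>j\<in>J. (\<lambda>z. \<phi> j z * h z) \<in> H2"
    "(\<Sum>j\<in>J. (H2_norm (\<lambda>z. \<phi> j z * h z))\<^sup>2) \<le> B * (H2_norm h)\<^sup>2"
proof -
  have B0: "0 \<le> B" using B[of 0] sum_nonneg[of J "\<lambda>j. (cmod (\<phi> j 0))\<^sup>2"] by simp
  have holh: "h holomorphic_on disc" by (rule H2_D(1)[OF h])
  have hol2: "(\<lambda>z. \<phi> j z * h z) holomorphic_on disc" if "j \<in> J" for j
    using hol[OF that] holh by (rule holomorphic_on_mult)
  have "(\<Sum>j\<in>J. circle_mean r (\<lambda>z. \<phi> j z * h z)) \<le> B * (H2_norm h)\<^sup>2" if r: "0 \<le> r" "r < 1" for r
  proof -
    let ?w = "\<lambda>t. complex_of_real r * cis t"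
    have ct: "continuous_on {0..2*pi} (\<lambda>t. (cmod (\<phi> j (?w t) * h (?w t)))\<^sup>2)" if "j \<in> J" for j
      using continuous_on_circle[OF holomorphic_on_imp_continuous_on[OF hol2[OF that]] r] by simp
    have ch: "continuous_on {0..2*pi} (\<lambda>t. (cmod (h (?w t)))\<^sup>2)"
      by (rule continuous_on_circle[OF holomorphic_on_imp_continuous_on[OF holh] r])
    have "(\<Sum>j\<in>J. circle_mean r (\<lambda>z. \<phi> j z * h z))
        = integral {0..2*pi} (\<lambda>t. \<Sum>j\<in>J. (cmod (\<phi> j (?w t) * h (?w t)))\<^sup>2) / (2*pi)"
      unfolding circle_mean_def sum_divide_distrib[symmetric]
      by (subst integral_sum[OF J]) (use ct integrable_continuous_interval in auto)
    also have "\<dots> \<le> integral {0..2*pi} (\<lambda>t. B * (cmod (h (?w t)))\<^sup>2) / (2*pi)"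
    proof (intro divide_right_mono integral_le)
      show "(\<lambda>t. \<Sum>j\<in>J. (cmod (\<phi> j (?w t) * h (?w t)))\<^sup>2) integrable_on {0..2*pi}"
        by (intro integrable_sum J integrable_continuous_interval) (use ct in auto)
      show "(\<lambda>t. B * (cmod (h (?w t)))\<^sup>2) integrable_on {0..2*pi}"
        by (intro integrable_continuous_interval continuous_intros ch)
      show "(\<Sum>j\<in>J. (cmod (\<phi> j (?w t) * h (?w t)))\<^sup>2) \<le> B * (cmod (h (?w t)))\<^sup>2" for t
        using B[OF circle_in_disc[OF r]]
        by (simp add: norm_mult power_mult_distrib flip: sum_distrib_right) (intro mult_right_mono; simp)
    qed simp
    also have "\<dots> = B * circle_mean r h" by (simp add: circle_mean_def)
    also have "\<dots> \<le> B * (H2_norm h)\<^sup>2" by (intro mult_left_mono circle_mean_le_H2_norm h r B0)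
    finally show ?thesis .
  qed
  from H2_of_circle_means_le[OF J hol2 this]
  show "\<forall>j\<in>J. (\<lambda>z. \<phi> j z * h z) \<in> H2" "(\<Sum>j\<in>J. (H2_norm (\<lambda>z. \<phi> j z * h z))\<^sup>2) \<le> B * (H2_norm h)\<^sup>2"
    by auto
qed

lemma holomorphic_on_suminf_disc:
  assumes hol: "\<And>n. u n holomorphic_on disc" and M: "summable M"
    and bound: "\<And>n z \<rho>. cmod z \<le> \<rho> \<Longrightarrow> \<rho> < 1 \<Longrightarrow> cmod (u n z) \<le> M n / sqrt (1 - \<rho>\<^sup>2)"
  shows "(\<lambda>z. \<Sum>n. u n z) holomorphic_on disc"
proof (rule holomorphic_uniform_sequence[OF open_ball])
  show "(\<lambda>z. \<Sum>n<N. u n z) holomorphic_on disc" for N by (intro holomorphic_intros hol)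
  fix x :: complex assume x: "x \<in> disc"
  define d where "d = (1 - cmod x) / 2"
  have d: "0 < d" "cmod x + d < 1" using x by (auto simp: d_def field_simps)
  have small: "cmod z \<le> cmod x + d" if "z \<in> cball x d" for z
    using that norm_triangle_ineq2[of z x] by (auto simp: dist_norm norm_minus_commute)
  then have "cball x d \<subseteq> disc" using d(2) by (force simp: subset_iff)
  moreover have "uniform_limit (cball x d) (\<lambda>N z. \<Sum>n<N. u n z) (\<lambda>z. \<Sum>n. u n z) sequentially"
    by (rule Weierstrass_m_test[OF bound[OF small d(2)] summable_divide[OF M]])
  ultimately show "\<exists>d>0. cball x d \<subseteq> disc \<and>
      uniform_limit (cball x d) (\<lambda>N z. \<Sum>n<N. u n z) (\<lambda>z. \<Sum>n. u n z) sequentially"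
    using d by blast
qed

text \<open>Completeness of \<open>H\<^sup>2\<close> is replaced by the bound
  \<open>\<parallel>\<Sum>\<^sub>i\<^sub><\<^sub>N \<psi>\<^sub>i\<parallel>\<^sup>2 \<le> (\<Sum> \<parallel>\<psi>\<^sub>i\<parallel>)\<^sup>2\<close> on circle means, which passes to the limit.\<close>

lemma H2_suminf:
  assumes H2: "\<And>i. \<psi> i \<in> H2" and sm: "summable (\<lambda>i. H2_norm (\<psi> i))"
  shows "\<And>z. z \<in> disc \<Longrightarrow> summable (\<lambda>i. \<psi> i z)" "(\<lambda>z. \<Sum>i. \<psi> i z) \<in> H2"
proof -
  define G where "G z = (\<Sum>i. \<psi> i z)" for z
  note bound = H2_pointwise_bound[OF H2]
  have abs_sum: "summable (\<lambda>i. norm (\<psi> i z))" if "cmod z \<le> \<rho>" "\<rho> < 1" for z \<rho>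
    by (rule summable_comparison_test'[OF summable_divide[OF sm, of "sqrt (1 - \<rho>\<^sup>2)"], where N = 0])
      (simp add: bound that)
  then show "summable (\<lambda>i. \<psi> i z)" if "z \<in> disc" for z
    using that by (intro summable_norm_cancel[OF abs_sum]) auto
  have hol: "G holomorphic_on disc"
    unfolding G_def by (rule holomorphic_on_suminf_disc[OF H2_D(1)[OF H2] sm bound])
  define T where "T = (\<Sum>i. H2_norm (\<psi> i))"
  have partial: "(\<lambda>z. \<Sum>i<N. \<psi> i z) \<in> H2" "H2_norm (\<lambda>z. \<Sum>i<N. \<psi> i z) \<le> T" for N
  proof -
    have "(\<Sum>i<N. H2_norm (\<psi> i)) \<le> T"
      unfolding T_def by (rule sum_le_suminf[OF sm]) (auto intro: H2_norm_nonneg H2)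
    then show "(\<lambda>z. \<Sum>i<N. \<psi> i z) \<in> H2" "H2_norm (\<lambda>z. \<Sum>i<N. \<psi> i z) \<le> T"
      using H2_sum[of "{..<N}" \<psi>] H2 by auto
  qed
  have "circle_mean r G \<le> T\<^sup>2" if r: "0 \<le> r" "r < 1" for r
  proof (rule LIMSEQ_le_const2)
    show "(\<lambda>N. circle_mean r (\<lambda>z. \<Sum>i<N. \<psi> i z)) \<longlonglongrightarrow> circle_mean r G"
    proof (rule circle_mean_suminf[OF _ holomorphic_on_imp_continuous_on[OF hol] r _
        summable_divide[OF sm, of "sqrt (1 - r\<^sup>2)"]])
      show "continuous_on disc (\<psi> i)" for i by (rule holomorphic_on_imp_continuous_on[OF H2_D(1)[OF H2]])
      show "cmod (\<psi> i w) \<le> H2_norm (\<psi> i) / sqrt (1 - r\<^sup>2)" if "cmod w = r" for i w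
        using bound[of w r i] that r by simp
      show "(\<lambda>i. \<psi> i w) sums G w" if "cmod w = r" for w
        unfolding G_def using abs_sum[of w r] that r by (simp add: summable_sums summable_norm_cancel)
    qed
    have "circle_mean r (\<lambda>z. \<Sum>i<N. \<psi> i z) \<le> T\<^sup>2" for N
      using circle_mean_le_H2_norm[OF partial(1) r, of N]
        power_mono[OF partial(2) H2_norm_nonneg[OF partial(1)], of N 2]
      by linarith
    then show "\<exists>N0. \<forall>N\<ge>N0. circle_mean r (\<lambda>z. \<Sum>i<N. \<psi> i z) \<le> T\<^sup>2" by blast
  qed
  then have "\<forall>j\<in>{()}. G \<in> H2"
    by (intro H2_of_circle_means_le(1)[of "{()}" "\<lambda>_. G" "T\<^sup>2"]) (use hol in auto)
  then show "(\<lambda>z. \<Sum>i. \<psi> i z) \<in> H2" unfolding G_def by simp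
qed

lemma H2_mult_bounded:
  assumes "\<phi> holomorphic_on disc" "h \<in> H2" "\<And>z. z \<in> disc \<Longrightarrow> cmod (\<phi> z) \<le> K"
  shows "(\<lambda>z. \<phi> z * h z) \<in> H2"
proof -
  have "(\<Sum>j\<in>{()}. (cmod (\<phi> z))\<^sup>2) \<le> K\<^sup>2" if "z \<in> disc" for z
    using power_mono[OF assms(3)[OF that] norm_ge_zero] by simp
  then show ?thesis using H2_mult_family(1)[of "{()}" "\<lambda>_. \<phi>" h "K\<^sup>2"] assms(1,2) by auto
qed

section \<open>The space \<open>D(\<delta>\<^sub>1)\<close>\<close>

lemma radial_decomposition_bound:
  assumes g: "g \<in> H2" and f: "\<forall>z\<in>disc. f z = c + (z - 1) * g z" and r: "0 \<le> r" "r < 1"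
  shows "(cmod (f (complex_of_real r) - c))\<^sup>2 \<le> (1 - r) * (H2_norm g)\<^sup>2"
proof -
  have "cmod (complex_of_real r - 1) = \<bar>r - 1\<bar>"
    by (metis norm_of_real of_real_1 of_real_diff)
  then have dist1: "cmod (complex_of_real r - 1) = 1 - r" using r by simp
  have sq: "(sqrt (1 - r\<^sup>2))\<^sup>2 = (1 - r) * (1 + r)"
    using r by (simp add: power_le_one) (simp add: power2_eq_square algebra_simps)
  have "(cmod (f (complex_of_real r) - c))\<^sup>2 = (1 - r)\<^sup>2 * (cmod (g (complex_of_real r)))\<^sup>2"
    using f r dist1 by (simp add: norm_mult power_mult_distrib)
  also have "\<dots> \<le> (1 - r)\<^sup>2 * (H2_norm g / sqrt (1 - r\<^sup>2))\<^sup>2"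
    using H2_pointwise_bound[OF g, of "complex_of_real r" r] r by (intro mult_left_mono power_mono) auto
  also have "\<dots> = (1 - r)\<^sup>2 * (H2_norm g)\<^sup>2 / ((1 - r) * (1 + r))"
    by (simp add: power_divide sq)
  also have "\<dots> = (1 - r) / (1 + r) * (H2_norm g)\<^sup>2"
    using r by (simp add: power2_eq_square)
  also have "\<dots> \<le> (1 - r) * (H2_norm g)\<^sup>2"
    using r by (intro mult_right_mono) (auto simp: divide_le_eq)
  finally show ?thesis .
qed

lemma bv1_eqI:
  assumes g: "g \<in> H2" and f: "\<forall>z\<in>disc. f z = c + (z - 1) * g z"
  shows "bv1 f = c"
proof -
  have "((\<lambda>r. f (complex_of_real r) - c) \<longlongrightarrow> 0) (at_left 1)"
  proof (rule Lim_null_comparison)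
    show "\<forall>\<^sub>F r in at_left (1::real). norm (f (complex_of_real r) - c) \<le> sqrt (1 - r) * H2_norm g"
      using eventually_at_left_real[OF zero_less_one]
    proof (rule eventually_mono)
      fix r :: real assume r: "r \<in> {0<..<1}"
      then have "(cmod (f (complex_of_real r) - c))\<^sup>2 \<le> (sqrt (1 - r) * H2_norm g)\<^sup>2"
        using radial_decomposition_bound[OF g f, of r] by (simp add: power_mult_distrib)
      then show "norm (f (complex_of_real r) - c) \<le> sqrt (1 - r) * H2_norm g"
        by (rule power2_le_imp_le) (use H2_norm_nonneg[OF g] r in simp)
    qed
    have "((\<lambda>r. sqrt (1 - r) * H2_norm g) \<longlongrightarrow> sqrt (1 - 1) * H2_norm g) (at_left (1::real))"
      by (intro tendsto_intros)
    then show "((\<lambda>r. sqrt (1 - r) * H2_norm g) \<longlongrightarrow> 0) (at_left (1::real))" by simp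
  qed
  then have "((\<lambda>r. f (complex_of_real r)) \<longlongrightarrow> c) (at_left 1)" by (rule LIM_zero_cancel)
  then show ?thesis unfolding bv1_def by (intro tendsto_Lim) auto
qed

lemma Dd1_intro:
  assumes g: "g \<in> H2" and f: "\<forall>z\<in>disc. f z = c + (z - 1) * g z"
  shows "f \<in> Dd1" "bv1 f = c" "\<forall>z\<in>disc. Dd1_quot f z = g z"
    "(Dd1_norm f)\<^sup>2 = (H2_norm f)\<^sup>2 + (H2_norm g)\<^sup>2"
proof -
  have "(\<lambda>z. (z - 1) * g z) \<in> H2"
  proof (rule H2_mult_bounded[OF _ g])
    show "cmod (z - 1) \<le> 2" if "z \<in> disc" for z
      using that norm_triangle_ineq4[of z 1] by simp
  qed (intro holomorphic_intros)
  then have "(\<lambda>z. c + (z - 1) * g z) \<in> H2" by (rule H2_add(1)[OF H2_const(1)])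
  then have "f \<in> H2" by (rule H2_cong(1)) (use f in simp)
  then show "f \<in> Dd1" using g f by (auto simp: Dd1_def)
  show bv: "bv1 f = c" by (rule bv1_eqI[OF g f])
  show q: "\<forall>z\<in>disc. Dd1_quot f z = g z"
    using f by (auto simp: Dd1_quot_def bv)
  show "(Dd1_norm f)\<^sup>2 = (H2_norm f)\<^sup>2 + (H2_norm g)\<^sup>2"
    using H2_cong(2)[OF g, of "Dd1_quot f"] q by (simp add: Dd1_norm_def)
qed

lemma Dd1_D:
  assumes "f \<in> Dd1"
  shows "f \<in> H2" "Dd1_quot f \<in> H2" "\<forall>z\<in>disc. f z = bv1 f + (z - 1) * Dd1_quot f z"
    "(Dd1_norm f)\<^sup>2 = (H2_norm f)\<^sup>2 + (H2_norm (Dd1_quot f))\<^sup>2"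
proof -
  obtain c g where g: "g \<in> H2" and f: "\<forall>z\<in>disc. f z = c + (z - 1) * g z"
    using assms by (auto simp: Dd1_def)
  note I = Dd1_intro[OF g f]
  show "f \<in> H2" using assms by (simp add: Dd1_def)
  show "Dd1_quot f \<in> H2" using H2_cong(1)[OF g] I(3) by simp
  show "\<forall>z\<in>disc. f z = bv1 f + (z - 1) * Dd1_quot f z" using I f by auto
  show "(Dd1_norm f)\<^sup>2 = (H2_norm f)\<^sup>2 + (H2_norm (Dd1_quot f))\<^sup>2"
    unfolding Dd1_norm_def by simp
qed

lemma Dd1_norm_nonneg: "0 \<le> Dd1_norm f"
  by (simp add: Dd1_norm_def)

lemma Dd1_norm_ge:
  shows "H2_norm f \<le> Dd1_norm f" "H2_norm (Dd1_quot f) \<le> Dd1_norm f"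
  unfolding Dd1_norm_def by (auto intro: real_le_rsqrt)

lemma norm_bv1_sq_le:
  assumes "f \<in> Dd1"
  shows "(cmod (bv1 f))\<^sup>2 \<le> 2 * (Dd1_norm f)\<^sup>2"
proof -
  note E = Dd1_D[OF assms]
  have "f 0 = bv1 f - Dd1_quot f 0" using E(3) by simp
  then have "bv1 f = f 0 + Dd1_quot f 0" by simp
  then have "cmod (bv1 f) \<le> H2_norm f + H2_norm (Dd1_quot f)"
    using norm_triangle_ineq[of "f 0" "Dd1_quot f 0"]
      H2_pointwise_bound[OF E(1), of 0 0] H2_pointwise_bound[OF E(2), of 0 0] by simp
  then have "(cmod (bv1 f))\<^sup>2 \<le> (H2_norm f + H2_norm (Dd1_quot f))\<^sup>2"
    by (intro power_mono) auto
  also have "\<dots> \<le> 2 * ((H2_norm f)\<^sup>2 + (H2_norm (Dd1_quot f))\<^sup>2)"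
    using sum_squares_bound[of "H2_norm f" "H2_norm (Dd1_quot f)"] by (simp add: power2_sum)
  finally show ?thesis using E(4) by simp
qed

lemma Dd1_add:
  assumes "f \<in> Dd1" "g \<in> Dd1"
  shows "(\<lambda>z. f z + g z) \<in> Dd1" "Dd1_norm (\<lambda>z. f z + g z) \<le> Dd1_norm f + Dd1_norm g"
proof -
  note F = Dd1_D[OF assms(1)] and G = Dd1_D[OF assms(2)]
  have "\<forall>z\<in>disc. f z + g z = (bv1 f + bv1 g) + (z - 1) * (Dd1_quot f z + Dd1_quot g z)"
  proof
    fix z :: complex assume "z \<in> disc"
    then show "f z + g z = (bv1 f + bv1 g) + (z - 1) * (Dd1_quot f z + Dd1_quot g z)"
      unfolding F(3)[rule_format, OF \<open>z \<in> disc\<close>] G(3)[rule_format, OF \<open>z \<in> disc\<close>]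
      by (simp add: algebra_simps)
  qed
  note I = Dd1_intro[OF H2_add(1)[OF F(2) G(2)] this]
  show "(\<lambda>z. f z + g z) \<in> Dd1" by (rule I(1))
  have "Dd1_norm (\<lambda>z. f z + g z)
      = sqrt ((H2_norm (\<lambda>z. f z + g z))\<^sup>2 + (H2_norm (\<lambda>z. Dd1_quot f z + Dd1_quot g z))\<^sup>2)"
    using real_sqrt_unique[OF I(4) Dd1_norm_nonneg] by simp
  also have "\<dots> \<le> sqrt ((H2_norm f + H2_norm g)\<^sup>2 + (H2_norm (Dd1_quot f) + H2_norm (Dd1_quot g))\<^sup>2)"
    by (intro real_sqrt_le_mono add_mono power_mono H2_add F G H2_norm_nonneg)
  also have "\<dots> \<le> Dd1_norm f + Dd1_norm g"
    unfolding Dd1_norm_def by (rule real_sqrt_sum_squares_triangle_ineq)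
  finally show "Dd1_norm (\<lambda>z. f z + g z) \<le> Dd1_norm f + Dd1_norm g" .
qed

lemma Dd1_cmult:
  assumes "f \<in> Dd1"
  shows "(\<lambda>z. c * f z) \<in> Dd1" "Dd1_norm (\<lambda>z. c * f z) = cmod c * Dd1_norm f"
proof -
  note F = Dd1_D[OF assms]
  have "\<forall>z\<in>disc. c * f z = c * bv1 f + (z - 1) * (c * Dd1_quot f z)"
  proof
    fix z :: complex assume "z \<in> disc"
    then show "c * f z = c * bv1 f + (z - 1) * (c * Dd1_quot f z)"
      unfolding F(3)[rule_format, OF \<open>z \<in> disc\<close>] by (simp add: algebra_simps)
  qed
  note I = Dd1_intro[OF H2_cmult(1)[OF F(2)] this]
  show "(\<lambda>z. c * f z) \<in> Dd1" by (rule I(1))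
  have "(Dd1_norm (\<lambda>z. c * f z))\<^sup>2 = (cmod c * Dd1_norm f)\<^sup>2"
    using I(4) F(4) by (simp add: H2_cmult F(1,2) power_mult_distrib algebra_simps)
  then show "Dd1_norm (\<lambda>z. c * f z) = cmod c * Dd1_norm f"
    by (rule power2_eq_imp_eq) (simp_all add: Dd1_norm_nonneg)
qed

lemma Dd1_const: "(\<lambda>_. c) \<in> Dd1" "Dd1_norm (\<lambda>_. c) = cmod c"
proof -
  have "\<forall>z\<in>disc. c = c + (z - 1) * 0" by simp
  note I = Dd1_intro[OF H2_const(1) this]
  show "(\<lambda>_. c) \<in> Dd1" by (rule I(1))
  have "(Dd1_norm (\<lambda>_. c))\<^sup>2 = (cmod c)\<^sup>2" using I(4) H2_const(2) by simp
  then show "Dd1_norm (\<lambda>_. c) = cmod c"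
    by (rule power2_eq_imp_eq) (auto intro: Dd1_norm_nonneg)
qed

lemma Dd1_sum:
  assumes "finite I" "\<And>i. i \<in> I \<Longrightarrow> f i \<in> Dd1"
  shows "(\<lambda>z. \<Sum>i\<in>I. f i z) \<in> Dd1 \<and> Dd1_norm (\<lambda>z. \<Sum>i\<in>I. f i z) \<le> (\<Sum>i\<in>I. Dd1_norm (f i))"
  using assms
proof (induction I rule: finite_induct)
  case empty
  show ?case using Dd1_const[of 0] by simp
next
  case (insert i I)
  then show ?case using Dd1_add[of "f i" "\<lambda>z. \<Sum>i\<in>I. f i z"] by auto
qed

section \<open>Multiplication operators\<close>

definition Dd1_multiplier_le :: "(complex \<Rightarrow> complex) \<Rightarrow> real \<Rightarrow> bool" where
  "Dd1_multiplier_le F \<kappa> \<longleftrightarrow>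
     (\<forall>h\<in>Dd1. (\<lambda>z. F z * h z) \<in> Dd1 \<and> Dd1_norm (\<lambda>z. F z * h z) \<le> \<kappa> * Dd1_norm h)"

text \<open>The powers \<open>F\<^sup>n\<close> have multiplier norm at most \<open>\<kappa>\<^sup>n\<close>, while point evaluation at
  \<open>w\<close> is a bounded functional.\<close>

lemma Dd1_multiplier_le_pointwise:
  assumes F: "Dd1_multiplier_le F \<kappa>" and w: "w \<in> disc"
  shows "cmod (F w) \<le> \<kappa>"
proof -
  have mult: "(\<lambda>z. F z * h z) \<in> Dd1" "Dd1_norm (\<lambda>z. F z * h z) \<le> \<kappa> * Dd1_norm h" if "h \<in> Dd1" for h
    using F that by (auto simp: Dd1_multiplier_le_def)
  have "0 \<le> Dd1_norm (\<lambda>z. F z * 1)" by (rule Dd1_norm_nonneg)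
  then have \<kappa>: "0 \<le> \<kappa>" using mult(2)[OF Dd1_const(1), of 1] Dd1_const(2)[of 1] by simp
  have pow: "(\<lambda>z. F z ^ n) \<in> Dd1 \<and> Dd1_norm (\<lambda>z. F z ^ n) \<le> \<kappa> ^ n" for n
  proof (induction n)
    case 0
    then show ?case using Dd1_const[of 1] by simp
  next
    case (Suc n)
    then have "Dd1_norm (\<lambda>z. F z * F z ^ n) \<le> \<kappa> * \<kappa> ^ n"
      using mult(2)[of "\<lambda>z. F z ^ n"] \<kappa> by (meson mult_left_mono order.trans)
    then show ?case using mult(1)[of "\<lambda>z. F z ^ n"] Suc by simp
  qed
  define K where "K = 1 / sqrt (1 - (cmod w)\<^sup>2)"
  have K: "0 \<le> K" using w by (simp add: K_def power_le_one)
  have "cmod (F w) ^ n \<le> K * \<kappa> ^ n" for n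
  proof -
    have "cmod (F w) ^ n \<le> H2_norm (\<lambda>z. F z ^ n) * K"
      using H2_pointwise_bound[OF Dd1_D(1)[OF conjunct1[OF pow]], of w "cmod w" n] w
      by (simp add: norm_power K_def)
    also have "\<dots> \<le> \<kappa> ^ n * K"
      using Dd1_norm_ge(1)[of "\<lambda>z. F z ^ n"] pow[of n] K by (intro mult_right_mono) auto
    finally show ?thesis by (simp add: mult.commute)
  qed
  then show ?thesis by (rule le_of_power_le_const_mult_power[OF \<kappa> norm_ge_zero])
qed

lemma MPhi_bounded_byD:
  assumes "MPhi_bounded_by \<Phi> C" "f \<in> Dd1"
  shows "\<And>j. (\<lambda>z. \<Phi> j z * f z) \<in> Dd1" "summable (\<lambda>j. (Dd1_norm (\<lambda>z. \<Phi> j z * f z))\<^sup>2)"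
    "(\<Sum>j. (Dd1_norm (\<lambda>z. \<Phi> j z * f z))\<^sup>2) \<le> C\<^sup>2 * (Dd1_norm f)\<^sup>2"
  using assms unfolding MPhi_bounded_by_def by auto

lemma MPhi_bounded_by_norm_sum:
  assumes "MPhi_bounded_by \<Phi> C"
  shows "summable (\<lambda>j. (Dd1_norm (\<Phi> j))\<^sup>2)" "(\<Sum>j. (Dd1_norm (\<Phi> j))\<^sup>2) \<le> C\<^sup>2"
  using MPhi_bounded_byD[OF assms Dd1_const(1)[of 1]] Dd1_const(2)[of 1] by simp_all

lemma MPhi_bounded_by_multiplier_le:
  assumes "MPhi_bounded_by \<Phi> C"
  shows "Dd1_multiplier_le (\<lambda>z. \<Sum>j<N. a j * \<Phi> j z) (sqrt (\<Sum>j<N. (cmod (a j))\<^sup>2) * \<bar>C\<bar>)"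
  unfolding Dd1_multiplier_le_def
proof
  fix h assume h: "h \<in> Dd1"
  note M = MPhi_bounded_byD[OF assms h]
  have e: "(\<lambda>z. (\<Sum>j<N. a j * \<Phi> j z) * h z) = (\<lambda>z. \<Sum>j<N. a j * (\<Phi> j z * h z))"
    by (simp add: sum_distrib_right mult.assoc)
  have S: "(\<lambda>z. \<Sum>j<N. a j * (\<Phi> j z * h z)) \<in> Dd1 \<and>
      Dd1_norm (\<lambda>z. \<Sum>j<N. a j * (\<Phi> j z * h z)) \<le> (\<Sum>j<N. Dd1_norm (\<lambda>z. a j * (\<Phi> j z * h z)))"
    by (rule Dd1_sum) (auto intro: Dd1_cmult M(1))
  have "(\<Sum>j<N. Dd1_norm (\<lambda>z. a j * (\<Phi> j z * h z)))
      = (\<Sum>j<N. \<bar>cmod (a j)\<bar> * \<bar>Dd1_norm (\<lambda>z. \<Phi> j z * h z)\<bar>)"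
    by (simp add: Dd1_cmult(2)[OF M(1)] Dd1_norm_nonneg)
  also have "\<dots> \<le> L2_set (\<lambda>j. cmod (a j)) {..<N} * L2_set (\<lambda>j. Dd1_norm (\<lambda>z. \<Phi> j z * h z)) {..<N}"
    by (rule L2_set_mult_ineq)
  also have "\<dots> \<le> sqrt (\<Sum>j<N. (cmod (a j))\<^sup>2) * sqrt (C\<^sup>2 * (Dd1_norm h)\<^sup>2)"
    unfolding L2_set_def
    by (intro mult_left_mono real_sqrt_le_mono order.trans[OF sum_le_suminf[OF M(2)] M(3)])
      (auto intro: sum_nonneg)
  also have "\<dots> = sqrt (\<Sum>j<N. (cmod (a j))\<^sup>2) * \<bar>C\<bar> * Dd1_norm h"
    by (simp add: real_sqrt_mult Dd1_norm_nonneg)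
  finally show "(\<lambda>z. (\<Sum>j<N. a j * \<Phi> j z) * h z) \<in> Dd1 \<and>
      Dd1_norm (\<lambda>z. (\<Sum>j<N. a j * \<Phi> j z) * h z) \<le> sqrt (\<Sum>j<N. (cmod (a j))\<^sup>2) * \<bar>C\<bar> * Dd1_norm h"
    using S unfolding e by linarith
qed

lemma MPhi_bounded_by_pointwise:
  assumes MB: "MPhi_bounded_by \<Phi> C" and w: "w \<in> disc"
  shows "summable (\<lambda>j. (cmod (\<Phi> j w))\<^sup>2)" "(\<Sum>j. (cmod (\<Phi> j w))\<^sup>2) \<le> C\<^sup>2"
proof -
  have partial: "(\<Sum>j<N. (cmod (\<Phi> j w))\<^sup>2) \<le> C\<^sup>2" for N
  proof -
    define s where "s = (\<Sum>j<N. (cmod (\<Phi> j w))\<^sup>2)"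
    have s0: "0 \<le> s" by (simp add: s_def sum_nonneg)
    have "(\<Sum>j<N. cnj (\<Phi> j w) * \<Phi> j w) = complex_of_real s"
      unfolding s_def of_real_sum complex_norm_square by (simp add: mult.commute)
    moreover have "Dd1_multiplier_le (\<lambda>z. \<Sum>j<N. cnj (\<Phi> j w) * \<Phi> j z) (sqrt s * \<bar>C\<bar>)"
      using MPhi_bounded_by_multiplier_le[OF MB, of "\<lambda>j. cnj (\<Phi> j w)" N] by (simp add: s_def)
    ultimately have "s \<le> sqrt s * \<bar>C\<bar>"
      using Dd1_multiplier_le_pointwise[OF _ w] s0 by fastforce
    then have le: "sqrt s * sqrt s \<le> sqrt s * \<bar>C\<bar>" using s0 by simp
    have "sqrt s \<le> \<bar>C\<bar>"
    proof (cases "s = 0")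
      case False
      then show ?thesis using s0 by (intro mult_left_le_imp_le[OF le]) simp
    qed simp
    then show ?thesis
      using s0 by (metis abs_ge_zero power2_abs real_sqrt_ge_zero real_sqrt_pow2 power_mono s_def)
  qed
  then show s: "summable (\<lambda>j. (cmod (\<Phi> j w))\<^sup>2)" by (intro summableI_nonneg_bounded) auto
  show "(\<Sum>j. (cmod (\<Phi> j w))\<^sup>2) \<le> C\<^sup>2" by (rule suminf_le_const[OF s partial])
qed

lemma Dd1_mult_norm_sq_le:
  assumes \<phi>: "\<phi> \<in> Dd1" and f: "f \<in> Dd1" and \<phi>g: "(\<lambda>z. \<phi> z * Dd1_quot f z) \<in> H2"
  shows "(\<lambda>z. \<phi> z * f z) \<in> Dd1"
    "(Dd1_norm (\<lambda>z. \<phi> z * f z))\<^sup>2 \<le> (H2_norm (\<lambda>z. \<phi> z * f z))\<^sup>2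
       + 2 * (H2_norm (\<lambda>z. \<phi> z * Dd1_quot f z))\<^sup>2 + 2 * (cmod (bv1 f))\<^sup>2 * (Dd1_norm \<phi>)\<^sup>2"
proof -
  note F = Dd1_D[OF f] and P = Dd1_D[OF \<phi>]
  define q where "q z = \<phi> z * Dd1_quot f z + bv1 f * Dd1_quot \<phi> z" for z
  have q: "q \<in> H2" "H2_norm q \<le> H2_norm (\<lambda>z. \<phi> z * Dd1_quot f z) + cmod (bv1 f) * H2_norm (Dd1_quot \<phi>)"
    using H2_add[OF \<phi>g H2_cmult(1)[OF P(2)]] H2_cmult(2)[OF P(2)] unfolding q_def by auto
  have "\<forall>z\<in>disc. \<phi> z * f z = bv1 \<phi> * bv1 f + (z - 1) * q z"
  proof
    fix z :: complex assume "z \<in> disc"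
    then show "\<phi> z * f z = bv1 \<phi> * bv1 f + (z - 1) * q z"
      unfolding q_def F(3)[rule_format, OF \<open>z \<in> disc\<close>] P(3)[rule_format, OF \<open>z \<in> disc\<close>]
      by (simp add: algebra_simps)
  qed
  note I = Dd1_intro[OF q(1) this]
  show "(\<lambda>z. \<phi> z * f z) \<in> Dd1" by (rule I(1))
  have "(H2_norm q)\<^sup>2 \<le> (H2_norm (\<lambda>z. \<phi> z * Dd1_quot f z) + cmod (bv1 f) * H2_norm (Dd1_quot \<phi>))\<^sup>2"
    using q(2) H2_norm_nonneg[OF q(1)] by (intro power_mono)
  also have "\<dots> \<le> 2 * (H2_norm (\<lambda>z. \<phi> z * Dd1_quot f z))\<^sup>2 + 2 * (cmod (bv1 f) * H2_norm (Dd1_quot \<phi>))\<^sup>2"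
    using sum_squares_bound[of "H2_norm (\<lambda>z. \<phi> z * Dd1_quot f z)" "cmod (bv1 f) * H2_norm (Dd1_quot \<phi>)"]
    by (simp add: power2_sum)
  also have "(cmod (bv1 f) * H2_norm (Dd1_quot \<phi>))\<^sup>2 \<le> (cmod (bv1 f))\<^sup>2 * (Dd1_norm \<phi>)\<^sup>2"
    unfolding power_mult_distrib using Dd1_norm_ge(2)[of \<phi>] H2_norm_nonneg[OF P(2)]
    by (intro mult_left_mono power_mono) auto
  finally show "(Dd1_norm (\<lambda>z. \<phi> z * f z))\<^sup>2 \<le> (H2_norm (\<lambda>z. \<phi> z * f z))\<^sup>2
       + 2 * (H2_norm (\<lambda>z. \<phi> z * Dd1_quot f z))\<^sup>2 + 2 * (cmod (bv1 f))\<^sup>2 * (Dd1_norm \<phi>)\<^sup>2"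
    using I(4) by simp
qed

lemma MPhi_bounded_byI:
  assumes D: "\<And>j. \<Phi> j \<in> Dd1" and S: "summable (\<lambda>j. (Dd1_norm (\<Phi> j))\<^sup>2)"
    and B: "\<forall>z\<in>disc. summable (\<lambda>j. (cmod (\<Phi> j z))\<^sup>2) \<and> (\<Sum>j. (cmod (\<Phi> j z))\<^sup>2) \<le> B"
  shows "MPhi_bounded_by \<Phi> (sqrt (2 * B + 4 * (\<Sum>j. (Dd1_norm (\<Phi> j))\<^sup>2)))"
proof -
  define \<Sigma> where "\<Sigma> = (\<Sum>j. (Dd1_norm (\<Phi> j))\<^sup>2)"
  have \<Sigma>0: "0 \<le> \<Sigma>" unfolding \<Sigma>_def by (intro suminf_nonneg S) auto
  have BN: "(\<Sum>j<N. (cmod (\<Phi> j z))\<^sup>2) \<le> B" if "z \<in> disc" for N z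
    using B that sum_le_suminf[of "\<lambda>j. (cmod (\<Phi> j z))\<^sup>2" "{..<N}"] by fastforce
  have B0: "0 \<le> B" using BN[of 0 0] by simp
  have hol: "\<Phi> j holomorphic_on disc" for j using H2_D(1)[OF Dd1_D(1)[OF D]] .
  have "(\<lambda>z. \<Phi> j z * f z) \<in> Dd1 \<and> summable (\<lambda>j. (Dd1_norm (\<lambda>z. \<Phi> j z * f z))\<^sup>2) \<and>
      (\<Sum>j. (Dd1_norm (\<lambda>z. \<Phi> j z * f z))\<^sup>2) \<le> (2 * B + 4 * \<Sigma>) * (Dd1_norm f)\<^sup>2"
    if f: "f \<in> Dd1" for f j
  proof -
    note F = Dd1_D[OF f]
    note MF = H2_mult_family[OF finite_lessThan hol F(1) BN]
    note MG = H2_mult_family[OF finite_lessThan hol F(2) BN]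
    have \<Phi>g: "(\<lambda>z. \<Phi> j z * Dd1_quot f z) \<in> H2" for j using MG(1)[of "Suc j"] by auto
    note E = Dd1_mult_norm_sq_le[OF D f \<Phi>g]
    have partial: "(\<Sum>j<N. (Dd1_norm (\<lambda>z. \<Phi> j z * f z))\<^sup>2) \<le> (2 * B + 4 * \<Sigma>) * (Dd1_norm f)\<^sup>2" for N
    proof -
      have "(\<Sum>j<N. (Dd1_norm (\<lambda>z. \<Phi> j z * f z))\<^sup>2) \<le>
          (\<Sum>j<N. (H2_norm (\<lambda>z. \<Phi> j z * f z))\<^sup>2) + 2 * (\<Sum>j<N. (H2_norm (\<lambda>z. \<Phi> j z * Dd1_quot f z))\<^sup>2)
          + 2 * (cmod (bv1 f))\<^sup>2 * (\<Sum>j<N. (Dd1_norm (\<Phi> j))\<^sup>2)"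
        using sum_mono[of "{..<N}", OF E(2)] by (simp add: sum.distrib sum_distrib_left)
      also have "\<dots> \<le> B * (H2_norm f)\<^sup>2 + 2 * (B * (H2_norm (Dd1_quot f))\<^sup>2) + 2 * (2 * (Dd1_norm f)\<^sup>2) * \<Sigma>"
        using MF(2)[of N] MG(2)[of N] norm_bv1_sq_le[OF f] \<Sigma>0
          sum_le_suminf[OF S, of "{..<N}"]
        by (intro add_mono mult_left_mono mult_mono) (auto simp: \<Sigma>_def intro: sum_nonneg)
      also have "\<dots> = (2 * B + 4 * \<Sigma>) * (Dd1_norm f)\<^sup>2 - B * (H2_norm f)\<^sup>2"
        using F(4) by (simp add: algebra_simps)
      also have "\<dots> \<le> (2 * B + 4 * \<Sigma>) * (Dd1_norm f)\<^sup>2" using B0 by simp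
      finally show ?thesis .
    qed
    have "summable (\<lambda>j. (Dd1_norm (\<lambda>z. \<Phi> j z * f z))\<^sup>2)"
      by (rule summableI_nonneg_bounded[OF _ partial]) simp
    then show ?thesis using E(1) suminf_le_const partial by blast
  qed
  moreover have "(sqrt (2 * B + 4 * \<Sigma>))\<^sup>2 = 2 * B + 4 * \<Sigma>" using B0 \<Sigma>0 by simp
  ultimately show ?thesis unfolding MPhi_bounded_by_def \<Sigma>_def[symmetric] by simp
qed

lemma MPhi_bounded_by_bv1_sum:
  assumes D: "\<And>j. \<Phi> j \<in> Dd1" and MB: "MPhi_bounded_by \<Phi> C"
  shows "summable (\<lambda>j. (cmod (bv1 (\<Phi> j)))\<^sup>2)" "(\<Sum>j. (cmod (bv1 (\<Phi> j)))\<^sup>2) \<le> 2 * C\<^sup>2"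
proof -
  note S = MPhi_bounded_by_norm_sum[OF MB]
  have le: "(cmod (bv1 (\<Phi> j)))\<^sup>2 \<le> 2 * (Dd1_norm (\<Phi> j))\<^sup>2" for j by (rule norm_bv1_sq_le[OF D])
  show s: "summable (\<lambda>j. (cmod (bv1 (\<Phi> j)))\<^sup>2)"
    by (rule summable_comparison_test'[OF summable_mult[OF S(1), of 2], where N = 0]) (use le in simp)
  have "(\<Sum>j. (cmod (bv1 (\<Phi> j)))\<^sup>2) \<le> (\<Sum>j. 2 * (Dd1_norm (\<Phi> j))\<^sup>2)"
    by (rule suminf_le[OF le s summable_mult[OF S(1)]])
  also have "\<dots> \<le> 2 * C\<^sup>2" using S by (simp add: suminf_mult)
  finally show "(\<Sum>j. (cmod (bv1 (\<Phi> j)))\<^sup>2) \<le> 2 * C\<^sup>2" .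
qed

text \<open>If all \<open>\<phi>\<^sub>j(1)\<close> vanished, then \<open>|\<phi>\<^sub>j(r)|\<^sup>2 \<le> (1 - r) \<parallel>\<phi>\<^sub>j\<parallel>\<^sup>2\<close> would force
  \<open>\<Sum> |\<phi>\<^sub>j(r)|\<^sup>2 \<le> 1 - r\<close>, which is below \<open>\<epsilon>\<^sup>2\<close> for \<open>r\<close> close to 1.\<close>

lemma MPhi_bounded_by_ex_bv1_nonzero:
  assumes D: "\<And>j. \<Phi> j \<in> Dd1" and MB: "MPhi_bounded_by \<Phi> 1" and \<epsilon>: "0 < \<epsilon>\<^sup>2"
    and low: "\<forall>z\<in>disc. \<epsilon>\<^sup>2 \<le> (\<Sum>j. (cmod (\<Phi> j z))\<^sup>2)"
  shows "\<exists>j. bv1 (\<Phi> j) \<noteq> 0"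
proof (rule ccontr)
  assume "\<not> (\<exists>j. bv1 (\<Phi> j) \<noteq> 0)"
  then have bv0: "\<forall>z\<in>disc. \<Phi> j z = 0 + (z - 1) * Dd1_quot (\<Phi> j) z" for j
    using Dd1_D(3)[OF D] by simp
  note S = MPhi_bounded_by_norm_sum[OF MB]
  define r where "r = 1 - min (1/2) (\<epsilon>\<^sup>2/2)"
  have r: "0 \<le> r" "r < 1" "1 - r < \<epsilon>\<^sup>2" using \<epsilon> by (auto simp: r_def min_less_iff_disj)
  have le: "(cmod (\<Phi> j (complex_of_real r)))\<^sup>2 \<le> (1 - r) * (Dd1_norm (\<Phi> j))\<^sup>2" for j
  proof -
    have "(cmod (\<Phi> j (complex_of_real r)))\<^sup>2 \<le> (1 - r) * (H2_norm (Dd1_quot (\<Phi> j)))\<^sup>2"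
      using radial_decomposition_bound[OF Dd1_D(2)[OF D] bv0 r(1,2)] by simp
    also have "\<dots> \<le> (1 - r) * (Dd1_norm (\<Phi> j))\<^sup>2"
      using Dd1_norm_ge(2)[of "\<Phi> j"] H2_norm_nonneg[OF Dd1_D(2)[OF D]] r
      by (intro mult_left_mono power_mono) auto
    finally show ?thesis .
  qed
  have sm: "summable (\<lambda>j. (1 - r) * (Dd1_norm (\<Phi> j))\<^sup>2)" by (rule summable_mult[OF S(1)])
  have s: "summable (\<lambda>j. (cmod (\<Phi> j (complex_of_real r)))\<^sup>2)"
    by (rule summable_comparison_test'[OF sm, where N = 0]) (use le in simp)
  have "(\<Sum>j. (cmod (\<Phi> j (complex_of_real r)))\<^sup>2) \<le> (\<Sum>j. (1 - r) * (Dd1_norm (\<Phi> j))\<^sup>2)"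
    by (rule suminf_le[OF le s sm])
  also have "\<dots> \<le> 1 - r" using S r by (simp add: suminf_mult mult_left_le)
  also have "\<dots> < \<epsilon>\<^sup>2" by (rule r(3))
  finally have "(\<Sum>j. (cmod (\<Phi> j (complex_of_real r)))\<^sup>2) < \<epsilon>\<^sup>2" .
  moreover have "\<epsilon>\<^sup>2 \<le> (\<Sum>j. (cmod (\<Phi> j (complex_of_real r)))\<^sup>2)" using low r by simp
  ultimately show False by linarith
qed

lemma MPhi_bounded_by_bv1_combination_bound:
  assumes D: "\<And>j. \<Phi> j \<in> Dd1" and MB: "MPhi_bounded_by \<Phi> 1" and z: "z \<in> disc"
  shows "cmod (\<Sum>i. (\<Phi> i z - bv1 (\<Phi> i)) * cnj (bv1 (\<Phi> i))) \<le> 4"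
proof -
  define c where "c i = bv1 (\<Phi> i)" for i
  note C = MPhi_bounded_by_bv1_sum[OF D MB, folded c_def] and P = MPhi_bounded_by_pointwise[OF MB z]
  note CS = cauchy_schwarz_suminf[OF P(1) C(1)]
  let ?t = "\<lambda>i. (\<Phi> i z - c i) * cnj (c i)"
  have le: "norm (?t i) \<le> \<bar>cmod (\<Phi> i z) * cmod (c i)\<bar> + (cmod (c i))\<^sup>2" for i
  proof -
    have "norm (?t i) = cmod (\<Phi> i z - c i) * cmod (c i)" by (simp add: norm_mult)
    also have "\<dots> \<le> (cmod (\<Phi> i z) + cmod (c i)) * cmod (c i)"
      by (intro mult_right_mono norm_triangle_ineq4) auto
    finally show ?thesis by (simp add: algebra_simps power2_eq_square)
  qed
  have sr: "summable (\<lambda>i. \<bar>cmod (\<Phi> i z) * cmod (c i)\<bar> + (cmod (c i))\<^sup>2)"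
    by (intro summable_add CS(1) C(1))
  have st: "summable (\<lambda>i. norm (?t i))"
    by (rule summable_comparison_test'[OF sr, where N = 0]) (use le in simp)
  have "cmod (\<Sum>i. ?t i) \<le> (\<Sum>i. \<bar>cmod (\<Phi> i z) * cmod (c i)\<bar> + (cmod (c i))\<^sup>2)"
    by (rule order.trans[OF summable_norm[OF st] suminf_le[OF le st sr]])
  also have "\<dots> = (\<Sum>i. \<bar>cmod (\<Phi> i z) * cmod (c i)\<bar>) + (\<Sum>i. (cmod (c i))\<^sup>2)"
    by (rule suminf_add[OF CS(1) C(1), symmetric])
  also have "\<dots> \<le> sqrt 1 * sqrt 4 + 2"
    using CS(2) P(2) C(2) suminf_nonneg[OF C(1)]
    by (intro add_mono order.trans[OF CS(2)] mult_mono real_sqrt_le_mono) auto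
  finally show ?thesis by (simp add: c_def)
qed

lemma MPhi_bounded_by_bv1_combination:
  assumes D: "\<And>j. \<Phi> j \<in> Dd1" and MB: "MPhi_bounded_by \<Phi> 1"
  defines "f \<equiv> \<lambda>z. \<Sum>i. (\<Phi> i z - bv1 (\<Phi> i)) * cnj (bv1 (\<Phi> i))"
  shows "f \<in> MDd1" "bv1 f = 0"
proof -
  define c where "c i = bv1 (\<Phi> i)" for i
  define \<psi> where "\<psi> i = (\<lambda>z. cnj (c i) * Dd1_quot (\<Phi> i) z)" for i
  note C = MPhi_bounded_by_bv1_sum[OF D MB, folded c_def] and S = MPhi_bounded_by_norm_sum[OF MB]
  have \<psi>: "\<psi> i \<in> H2" "H2_norm (\<psi> i) = \<bar>cmod (c i) * H2_norm (Dd1_quot (\<Phi> i))\<bar>" for i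
    using H2_cmult[OF Dd1_D(2)[OF D]] H2_norm_nonneg[OF Dd1_D(2)[OF D]] by (auto simp: \<psi>_def)
  have "summable (\<lambda>i. (H2_norm (Dd1_quot (\<Phi> i)))\<^sup>2)"
    using Dd1_norm_ge(2) H2_norm_nonneg[OF Dd1_D(2)[OF D]]
    by (intro summable_comparison_test'[OF S(1), where N = 0]) (simp add: power_mono)
  then have sm: "summable (\<lambda>i. H2_norm (\<psi> i))"
    unfolding \<psi>(2) using cauchy_schwarz_suminf(1)[OF C(1)] by simp
  note G = H2_suminf(2)[OF \<psi>(1) sm]
  have "\<forall>z\<in>disc. f z = 0 + (z - 1) * (\<Sum>i. \<psi> i z)"
  proof
    fix z :: complex assume z: "z \<in> disc"
    have "(\<Phi> i z - c i) * cnj (c i) = (z - 1) * \<psi> i z" for i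
      unfolding \<psi>_def c_def Dd1_D(3)[OF D, rule_format, OF z] by (simp add: algebra_simps)
    then show "f z = 0 + (z - 1) * (\<Sum>i. \<psi> i z)"
      unfolding f_def c_def[symmetric] using suminf_mult[OF H2_suminf(1)[OF \<psi>(1) sm z]] by simp
  qed
  note I = Dd1_intro[OF G this]
  have "bounded (f ` disc)"
    using MPhi_bounded_by_bv1_combination_bound[OF D MB] unfolding bounded_iff f_def by blast
  then show "f \<in> MDd1" using I(1) by (simp add: MDd1_def)
  show "bv1 f = 0" by (rule I(2))
qed

theorem lemma3p2:
  fixes \<Phi> :: "nat \<Rightarrow> complex \<Rightarrow> complex"
  assumes mult: "\<forall>j. \<Phi> j \<in> MDd1"
  shows
   "(MPhi_bounded \<Phi> \<longleftrightarrow>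
       (summable (\<lambda>j. (Dd1_norm (\<Phi> j))\<^sup>2) \<and>
        (\<exists>B. \<forall>z\<in>disc. summable (\<lambda>j. (cmod (\<Phi> j z))\<^sup>2) \<and> (\<Sum>j. (cmod (\<Phi> j z))\<^sup>2) \<le> B)))
    \<and> (\<forall>\<epsilon>::real. MPhi_bounded_by \<Phi> 1 \<and> 0 < \<epsilon>\<^sup>2 \<and>
          (\<forall>z\<in>disc. \<epsilon>\<^sup>2 \<le> (\<Sum>j. (cmod (\<Phi> j z))\<^sup>2))
        \<longrightarrow> (\<exists>j. bv1 (\<Phi> j) \<noteq> 0))
    \<and> (\<forall>f. MPhi_bounded_by \<Phi> 1 \<and>
          f = (\<lambda>z. \<Sum>i. (\<Phi> i z - bv1 (\<Phi> i)) * cnj (bv1 (\<Phi> i)))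
        \<longrightarrow> f \<in> MDd1 \<and> bv1 f = 0)"
proof (intro conjI allI impI)
  have D: "\<And>j. \<Phi> j \<in> Dd1" using mult by (simp add: MDd1_def)
  show "MPhi_bounded \<Phi> \<longleftrightarrow>
       (summable (\<lambda>j. (Dd1_norm (\<Phi> j))\<^sup>2) \<and>
        (\<exists>B. \<forall>z\<in>disc. summable (\<lambda>j. (cmod (\<Phi> j z))\<^sup>2) \<and> (\<Sum>j. (cmod (\<Phi> j z))\<^sup>2) \<le> B))"
  proof
    assume "MPhi_bounded \<Phi>"
    then obtain C where MB: "MPhi_bounded_by \<Phi> C" by (auto simp: MPhi_bounded_def)
    then show "summable (\<lambda>j. (Dd1_norm (\<Phi> j))\<^sup>2) \<and>
        (\<exists>B. \<forall>z\<in>disc. summable (\<lambda>j. (cmod (\<Phi> j z))\<^sup>2) \<and> (\<Sum>j. (cmod (\<Phi> j z))\<^sup>2) \<le> B)"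
      using MPhi_bounded_by_norm_sum(1) MPhi_bounded_by_pointwise by blast
  qed (use MPhi_bounded_byI[of \<Phi>, OF D] in \<open>auto simp: MPhi_bounded_def\<close>)
  show "\<exists>j. bv1 (\<Phi> j) \<noteq> 0"
    if "MPhi_bounded_by \<Phi> 1 \<and> 0 < \<epsilon>\<^sup>2 \<and> (\<forall>z\<in>disc. \<epsilon>\<^sup>2 \<le> (\<Sum>j. (cmod (\<Phi> j z))\<^sup>2))" for \<epsilon> :: real
    using MPhi_bounded_by_ex_bv1_nonzero[of \<Phi>, OF D] that by blast
  show "f \<in> MDd1" "bv1 f = 0"
    if "MPhi_bounded_by \<Phi> 1 \<and> f = (\<lambda>z. \<Sum>i. (\<Phi> i z - bv1 (\<Phi> i)) * cnj (bv1 (\<Phi> i)))" for f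
    using MPhi_bounded_by_bv1_combination[of \<Phi>, OF D] that by blast+
qed

end
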